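(* Let $L$ be a lattice. The following are equivalent: (i) $L$ is distributive; (ii) $M_3[L]$ is a modular lattice; (iii) $M_3[L]$ is an Arguesian lattice. Moreover, if these conditions hold, then for every field $\mathbb{F}$ the lattice $M_3[L]$ can be embedded into the lattice of all subspaces of some vector space over $\mathbb{F}$.
   Context: A triple $(a,b,c)\in L^3$ is balanced if $a\wedge b=a\wedge c=b\wedge c$; $M_3[L]$ is the set of balanced triples, ordered componentwise (Schmidt's $M_3[L]$ construction). When $L$ is distributive, $M_3[L]$ is a lattice with componentwise meet and join $(a,b,c)\vee(a',b',c')=\overline{(a\vee a',b\vee b',c\vee c')}$, where $\overline{(a,b,c)}=(a\vee(b\wedge c),\,b\vee(a\wedge c),\,c\vee(a\wedge b))$. A lattice is Arguesian if it satisfies the Arguesian identity (the lattice-theoretic form of Desargues' theorem, satisfied by subspace lattices of vector spaces). *)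

theory Defs
  imports Complex_Main "HOL-Library.Function_Algebras"
begin

definition distributive_lattice :: "'a::lattice itself \<Rightarrow> bool" where
  "distributive_lattice _ \<longleftrightarrow> (\<forall>x y z::'a. inf x (sup y z) = sup (inf x y) (inf x z))"

definition balanced :: "'a::lattice \<times> 'a \<times> 'a \<Rightarrow> bool" where
  "balanced t \<longleftrightarrow> (case t of (a, b, c) \<Rightarrow> inf a b = inf a c \<and> inf a c = inf b c)"

definition M3 :: "('a::lattice \<times> 'a \<times> 'a) set" where
  "M3 = {t. balanced t}"

definition le3 :: "'a::lattice \<times> 'a \<times> 'a \<Rightarrow> 'a \<times> 'a \<times> 'a \<Rightarrow> bool" where
  "le3 s t \<longleftrightarrow> (case s of (a, b, c) \<Rightarrow> case t of (a', b', c') \<Rightarrow> a \<le> a' \<and> b \<le> b' \<and> c \<le> c')"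

definition is_lub_in :: "'b set \<Rightarrow> ('b \<Rightarrow> 'b \<Rightarrow> bool) \<Rightarrow> 'b \<Rightarrow> 'b \<Rightarrow> 'b \<Rightarrow> bool" where
  "is_lub_in S le x y z \<longleftrightarrow> z \<in> S \<and> le x z \<and> le y z \<and> (\<forall>w\<in>S. le x w \<and> le y w \<longrightarrow> le z w)"

definition is_glb_in :: "'b set \<Rightarrow> ('b \<Rightarrow> 'b \<Rightarrow> bool) \<Rightarrow> 'b \<Rightarrow> 'b \<Rightarrow> 'b \<Rightarrow> bool" where
  "is_glb_in S le x y z \<longleftrightarrow> z \<in> S \<and> le z x \<and> le z y \<and> (\<forall>w\<in>S. le w x \<and> le w y \<longrightarrow> le w z)"

definition is_lattice_on :: "'b set \<Rightarrow> ('b \<Rightarrow> 'b \<Rightarrow> bool) \<Rightarrow> bool" where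
  "is_lattice_on S le \<longleftrightarrow>
     (\<forall>x\<in>S. \<forall>y\<in>S. (\<exists>z. is_lub_in S le x y z) \<and> (\<exists>z. is_glb_in S le x y z))"

definition pjoin :: "'b set \<Rightarrow> ('b \<Rightarrow> 'b \<Rightarrow> bool) \<Rightarrow> 'b \<Rightarrow> 'b \<Rightarrow> 'b" where
  "pjoin S le x y = (THE z. is_lub_in S le x y z)"

definition pmeet :: "'b set \<Rightarrow> ('b \<Rightarrow> 'b \<Rightarrow> bool) \<Rightarrow> 'b \<Rightarrow> 'b \<Rightarrow> 'b" where
  "pmeet S le x y = (THE z. is_glb_in S le x y z)"

definition modular_lattice_on :: "'b set \<Rightarrow> ('b \<Rightarrow> 'b \<Rightarrow> bool) \<Rightarrow> bool" where
  "modular_lattice_on S le \<longleftrightarrow> is_lattice_on S le \<and>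
     (\<forall>x\<in>S. \<forall>y\<in>S. \<forall>z\<in>S. le x z \<longrightarrow>
        pjoin S le x (pmeet S le y z) = pmeet S le (pjoin S le x y) z)"

definition arguesian_lattice_on :: "'b set \<Rightarrow> ('b \<Rightarrow> 'b \<Rightarrow> bool) \<Rightarrow> bool" where
  "arguesian_lattice_on S le \<longleftrightarrow> is_lattice_on S le \<and>
     (\<forall>a0\<in>S. \<forall>a1\<in>S. \<forall>a2\<in>S. \<forall>b0\<in>S. \<forall>b1\<in>S. \<forall>b2\<in>S.
        let J = pjoin S le; M = pmeet S le;
            c0 = M (J a1 a2) (J b1 b2);
            c1 = M (J a0 a2) (J b0 b2);
            c2 = M (J a0 a1) (J b0 b1);
            c = M c2 (J c0 c1)
        in le (M (M (J a0 b0) (J a1 b1)) (J a2 b2)) (J a0 (M b0 (J c b1))))"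

definition subspace_lattice_embedding ::
  "('f::field \<Rightarrow> 'v::ab_group_add \<Rightarrow> 'v) \<Rightarrow> 'b set \<Rightarrow> ('b \<Rightarrow> 'b \<Rightarrow> bool) \<Rightarrow> ('b \<Rightarrow> 'v set) \<Rightarrow> bool" where
  "subspace_lattice_embedding scale S le \<phi> \<longleftrightarrow>
     inj_on \<phi> S \<and> (\<forall>x\<in>S. module.subspace scale (\<phi> x)) \<and>
     (\<forall>x\<in>S. \<forall>y\<in>S. \<phi> (pmeet S le x y) = \<phi> x \<inter> \<phi> y \<and>
                  \<phi> (pjoin S le x y) = module.span scale (\<phi> x \<union> \<phi> y))"

definition fscale :: "'f::field \<Rightarrow> ('i \<Rightarrow> 'f) \<Rightarrow> ('i \<Rightarrow> 'f)" where
  "fscale c v = (\<lambda>i. c * v i)"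

lemma vector_space_fscale: "vector_space (fscale :: 'f::field \<Rightarrow> ('i \<Rightarrow> 'f) \<Rightarrow> _)"
  by unfold_locales (auto simp: fscale_def fun_eq_iff algebra_simps)

end

theory Submission
  imports Defs "HOL-Library.Product_Order" "HOL-Library.Product_Plus" "HOL-Library.Set_Algebras"
begin

unbundle lattice_syntax

text \<open>If \<open>L\<close> is distributive, every prime filter \<open>P\<close> of \<open>L\<close>, i.e. every lattice homomorphism
  \<open>L \<rightarrow> 2\<close>, sends a balanced triple \<open>(a, b, c)\<close> to the balanced triple \<open>(a \<in> P, b \<in> P, c \<in> P)\<close>
  of \<open>M\<^sub>3[2]\<close>, which is the five-element lattice \<open>M\<^sub>3\<close> and is realised by the subspaces \<open>0\<close>,
  three lines and \<open>F\<^sup>2\<close> of \<open>F\<^sup>2\<close>. The product of these maps over all prime filters embeds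
  \<open>M\<^sub>3[L]\<close> into the subspaces of a vector space, injectively by the prime filter separation
  theorem. Subspace lattices are modular and satisfy the Arguesian identity (Desargues), hence
  so does \<open>M\<^sub>3[L]\<close>.

  Conversely, suppose \<open>M\<^sub>3[L]\<close> is a lattice satisfying the modular inequality, which the
  Arguesian identity implies. The diagonal triples \<open>(a, a, a)\<close> show that \<open>L\<close> is modular, and for
  elements \<open>x, y, z \<ge> d\<close> meeting pairwise in \<open>d\<close> the triples \<open>(d, d, x) \<le> (d, y, x)\<close> and
  \<open>(x, z, d)\<close> force \<open>y \<sqinter> (x \<squnion> z) \<le> d\<close>. So \<open>L\<close> contains no diamond \<open>M\<^sub>3\<close>, and a modular
  lattice without diamonds is distributive.\<close>

section \<open>Distributive and modular lattices\<close>

lemma distrib_lattice_if_distributive: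
  "distributive_lattice TYPE('a::lattice) \<Longrightarrow> class.distrib_lattice inf (\<le>) (<) (sup :: 'a \<Rightarrow> 'a \<Rightarrow> 'a)"
  unfolding distributive_lattice_def by unfold_locales (rule distrib_imp1, blast)

lemma median_eq:
  assumes "class.distrib_lattice inf (\<le>) (<) (sup :: 'a::lattice \<Rightarrow> 'a \<Rightarrow> 'a)"
  shows "((a::'a) \<squnion> (b \<sqinter> c)) \<sqinter> (b \<squnion> (a \<sqinter> c)) = (a \<sqinter> b) \<squnion> (a \<sqinter> c) \<squnion> (b \<sqinter> c)"
proof -
  interpret D: distrib_lattice "inf :: 'a \<Rightarrow> 'a \<Rightarrow> 'a" "(\<le>)" "(<)" sup by (rule assms)
  have "(a \<squnion> (b \<sqinter> c)) \<sqinter> (b \<squnion> (a \<sqinter> c))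
      = ((a \<squnion> (b \<sqinter> c)) \<sqinter> b) \<squnion> ((a \<squnion> (b \<sqinter> c)) \<sqinter> (a \<sqinter> c))"
    by (rule D.inf_sup_distrib1)
  also have "(a \<squnion> (b \<sqinter> c)) \<sqinter> b = (a \<sqinter> b) \<squnion> (b \<sqinter> c)"
    by (simp add: D.inf_sup_distrib2 inf.absorb1)
  also have "(a \<squnion> (b \<sqinter> c)) \<sqinter> (a \<sqinter> c) = a \<sqinter> c"
    by (simp add: inf.absorb2 le_supI1)
  finally show ?thesis by (simp add: sup_aci)
qed

context
  assumes modular: "\<And>a b c :: 'a::lattice. a \<le> c \<Longrightarrow> a \<squnion> (b \<sqinter> c) = (a \<squnion> b) \<sqinter> c"
begin

text \<open>For the lower and upper medians \<open>d\<close> and \<open>e\<close> of \<open>x, y, z\<close>, the elements \<open>(x \<sqinter> e) \<squnion> d\<close>,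
  \<open>(y \<sqinter> e) \<squnion> d\<close>, \<open>(z \<sqinter> e) \<squnion> d\<close> of a modular lattice form a diamond between \<open>d\<close> and \<open>e\<close>,
  which is degenerate for all \<open>x, y, z\<close> exactly when the lattice is distributive.\<close>
lemma modular_diamond_inf:
  fixes x y z :: 'a
  defines "d \<equiv> (x \<sqinter> y) \<squnion> (y \<sqinter> z) \<squnion> (z \<sqinter> x)" and "e \<equiv> (x \<squnion> y) \<sqinter> (y \<squnion> z) \<sqinter> (z \<squnion> x)"
  shows "((x \<sqinter> e) \<squnion> d) \<sqinter> ((y \<sqinter> e) \<squnion> d) = d"
proof -
  have ye: "y \<sqinter> e = y \<sqinter> (z \<squnion> x)" unfolding e_def
    by (rule antisym) (auto intro: le_infI1 le_infI2 simp: le_supI1 le_supI2)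
  have "(y \<sqinter> e) \<squnion> d = (z \<sqinter> x) \<squnion> (y \<sqinter> (z \<squnion> x))"
    unfolding ye d_def
    by (rule antisym) (auto intro: le_supI1 le_supI2 le_infI1 le_infI2 simp: le_supI1 le_supI2)
  also have "\<dots> = ((z \<sqinter> x) \<squnion> y) \<sqinter> (z \<squnion> x)" by (rule modular) (simp add: le_supI1)
  finally have y_side: "(y \<sqinter> e) \<squnion> d = ((z \<sqinter> x) \<squnion> y) \<sqinter> (z \<squnion> x)" .
  have "x \<sqinter> ((y \<sqinter> e) \<squnion> d) = ((z \<sqinter> x) \<squnion> y) \<sqinter> x"
    unfolding y_side by (rule antisym) (auto intro: le_infI1 le_infI2)
  also have "\<dots> = (z \<sqinter> x) \<squnion> (y \<sqinter> x)" by (rule modular[symmetric]) simp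
  also have "\<dots> \<le> d" unfolding d_def by (auto intro: le_supI1 le_supI2 simp: inf_commute)
  finally have "(x \<sqinter> e) \<sqinter> ((y \<sqinter> e) \<squnion> d) \<le> d"
    by (meson inf_le1 inf_mono order_trans order_refl)
  moreover have "d \<squnion> ((x \<sqinter> e) \<sqinter> ((y \<sqinter> e) \<squnion> d)) = (d \<squnion> (x \<sqinter> e)) \<sqinter> ((y \<sqinter> e) \<squnion> d)"
    by (rule modular) simp
  ultimately show ?thesis by (metis sup.absorb1 sup_commute)
qed

lemma modular_diamond_sup:
  fixes x y z :: 'a
  defines "e \<equiv> (x \<squnion> y) \<sqinter> (y \<squnion> z) \<sqinter> (z \<squnion> x)"
  shows "e \<le> (x \<sqinter> e) \<squnion> (y \<sqinter> e)"
proof -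
  have xe: "x \<sqinter> e = x \<sqinter> (y \<squnion> z)" unfolding e_def
    by (rule antisym) (auto intro: le_infI1 le_infI2 simp: le_supI1 le_supI2)
  have ye: "y \<sqinter> e = y \<sqinter> (z \<squnion> x)" unfolding e_def
    by (rule antisym) (auto intro: le_infI1 le_infI2 simp: le_supI1 le_supI2)
  have "(y \<sqinter> (z \<squnion> x)) \<squnion> (x \<sqinter> (y \<squnion> z)) = ((y \<sqinter> (z \<squnion> x)) \<squnion> x) \<sqinter> (y \<squnion> z)"
    by (rule modular) (auto intro: le_infI1)
  moreover have "x \<squnion> (y \<sqinter> (z \<squnion> x)) = (x \<squnion> y) \<sqinter> (z \<squnion> x)" by (rule modular) simp
  ultimately have "(y \<sqinter> e) \<squnion> (x \<sqinter> e) = (x \<squnion> y) \<sqinter> (z \<squnion> x) \<sqinter> (y \<squnion> z)"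
    using xe ye by (simp add: sup_commute)
  then show ?thesis unfolding e_def by (simp add: sup_commute inf_aci)
qed

lemma distributive_if_diamonds_collapse:
  assumes collapse: "\<And>x y z :: 'a. y \<sqinter> ((x \<squnion> y) \<sqinter> (y \<squnion> z) \<sqinter> (z \<squnion> x)) \<le> (x \<sqinter> y) \<squnion> (y \<sqinter> z) \<squnion> (z \<sqinter> x)"
  shows "distributive_lattice TYPE('a)"
  unfolding distributive_lattice_def
proof (intro allI antisym)
  fix x y z :: 'a
  have "x \<sqinter> (y \<squnion> z) = x \<sqinter> ((y \<squnion> x) \<sqinter> (x \<squnion> z) \<sqinter> (z \<squnion> y))"
    by (rule antisym) (auto intro: le_infI1 le_infI2 simp: le_supI1 le_supI2 sup_commute)
  also have "\<dots> \<le> x \<sqinter> ((y \<sqinter> x) \<squnion> (x \<sqinter> z) \<squnion> (z \<sqinter> y))"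
    by (rule le_infI[OF inf_le1 collapse])
  also have "\<dots> = (x \<sqinter> y) \<squnion> (x \<sqinter> z)"
  proof -
    have "((x \<sqinter> y) \<squnion> (x \<sqinter> z)) \<squnion> ((z \<sqinter> y) \<sqinter> x) = (((x \<sqinter> y) \<squnion> (x \<sqinter> z)) \<squnion> (z \<sqinter> y)) \<sqinter> x"
      by (rule modular) simp
    moreover have "(z \<sqinter> y) \<sqinter> x \<le> (x \<sqinter> y) \<squnion> (x \<sqinter> z)"
      by (meson inf_le1 inf_le2 le_infI le_supI1 order_trans)
    ultimately show ?thesis by (metis inf_commute sup.absorb1)
  qed
  finally show "x \<sqinter> (y \<squnion> z) \<le> (x \<sqinter> y) \<squnion> (x \<sqinter> z)" .
  show "(x \<sqinter> y) \<squnion> (x \<sqinter> z) \<le> x \<sqinter> (y \<squnion> z)"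
    by (simp add: le_infI2 sup.coboundedI1 sup.coboundedI2)
qed

end

locale poset_on =
  fixes S :: "'a set" and le :: "'a \<Rightarrow> 'a \<Rightarrow> bool"
  assumes reflexive: "x \<in> S \<Longrightarrow> le x x"
    and antisymmetric: "x \<in> S \<Longrightarrow> y \<in> S \<Longrightarrow> le x y \<Longrightarrow> le y x \<Longrightarrow> x = y"
    and transitive: "x \<in> S \<Longrightarrow> y \<in> S \<Longrightarrow> z \<in> S \<Longrightarrow> le x y \<Longrightarrow> le y z \<Longrightarrow> le x z"
begin

lemma pjoin_eqI:
  assumes "is_lub_in S le x y z"
  shows "pjoin S le x y = z"
  unfolding pjoin_def
proof (rule the_equality)
  show "z' = z" if "is_lub_in S le x y z'" for z'
    using that assms unfolding is_lub_in_def by (blast intro: antisymmetric)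
qed (fact assms)

lemma pmeet_eqI:
  assumes "is_glb_in S le x y z"
  shows "pmeet S le x y = z"
  unfolding pmeet_def
proof (rule the_equality)
  show "z' = z" if "is_glb_in S le x y z'" for z'
    using that assms unfolding is_glb_in_def by (blast intro: antisymmetric)
qed (fact assms)

end

definition modular_inequality_on :: "'b set \<Rightarrow> ('b \<Rightarrow> 'b \<Rightarrow> bool) \<Rightarrow> bool" where
  "modular_inequality_on S le \<longleftrightarrow>
     (\<forall>x\<in>S. \<forall>y\<in>S. \<forall>z\<in>S. le x z \<longrightarrow>
        le (pmeet S le (pjoin S le x y) z) (pjoin S le x (pmeet S le y z)))"

locale lattice_on = poset_on +
  assumes lattice: "is_lattice_on S le"
begin

abbreviation join where "join \<equiv> pjoin S le"
abbreviation meet where "meet \<equiv> pmeet S le"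

lemma is_lub_join: "x \<in> S \<Longrightarrow> y \<in> S \<Longrightarrow> is_lub_in S le x y (join x y)"
  using lattice pjoin_eqI unfolding is_lattice_on_def by metis

lemma is_glb_meet: "x \<in> S \<Longrightarrow> y \<in> S \<Longrightarrow> is_glb_in S le x y (meet x y)"
  using lattice pmeet_eqI unfolding is_lattice_on_def by metis

lemma join_closed: "x \<in> S \<Longrightarrow> y \<in> S \<Longrightarrow> join x y \<in> S"
  and join_upper1: "x \<in> S \<Longrightarrow> y \<in> S \<Longrightarrow> le x (join x y)"
  and join_upper2: "x \<in> S \<Longrightarrow> y \<in> S \<Longrightarrow> le y (join x y)"
  using is_lub_join unfolding is_lub_in_def by blast+

lemma meet_closed: "x \<in> S \<Longrightarrow> y \<in> S \<Longrightarrow> meet x y \<in> S"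
  and meet_lower1: "x \<in> S \<Longrightarrow> y \<in> S \<Longrightarrow> le (meet x y) x"
  and meet_lower2: "x \<in> S \<Longrightarrow> y \<in> S \<Longrightarrow> le (meet x y) y"
  using is_glb_meet unfolding is_glb_in_def by blast+

lemma join_absorb1: "x \<in> S \<Longrightarrow> y \<in> S \<Longrightarrow> le y x \<Longrightarrow> join x y = x"
  by (rule pjoin_eqI) (auto simp: is_lub_in_def reflexive)

lemma join_absorb2: "x \<in> S \<Longrightarrow> y \<in> S \<Longrightarrow> le x y \<Longrightarrow> join x y = y"
  by (rule pjoin_eqI) (auto simp: is_lub_in_def reflexive)

lemma meet_absorb1: "x \<in> S \<Longrightarrow> y \<in> S \<Longrightarrow> le x y \<Longrightarrow> meet x y = x"
  by (rule pmeet_eqI) (auto simp: is_glb_in_def reflexive)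

lemma modular_inequality_if_modular:
  "modular_lattice_on S le \<Longrightarrow> modular_inequality_on S le"
  unfolding modular_lattice_on_def modular_inequality_on_def
  by (metis meet_closed join_closed reflexive)

lemma modular_inequality_if_arguesian:
  assumes "arguesian_lattice_on S le"
  shows "modular_inequality_on S le"
  unfolding modular_inequality_on_def
proof (intro ballI impI)
  fix x y z assume x: "x \<in> S" and y: "y \<in> S" and z: "z \<in> S" and "le x z"
  define w where "w = join (join x y) z"
  have xy: "join x y \<in> S" and w: "w \<in> S" unfolding w_def using x y z by (simp_all add: join_closed)
  have "le z w" "le (join x y) w" unfolding w_def using xy z by (simp_all add: join_upper1 join_upper2)
  then have "le x w" "le y w" using x y z w xy by (metis join_upper1 join_upper2 transitive)+
  have ww: "join w w = w" "meet w w = w" and zz: "join z z = z"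
    using w z by (simp_all add: join_absorb2 meet_absorb1 reflexive)
  have c2: "meet (join x z) (join y z) = z"
    using x y z \<open>le x z\<close> by (simp add: join_absorb2 meet_absorb1 join_closed join_upper2)
  have c0: "meet (join z w) (join z w) = w" and c1: "meet (join x w) (join y w) = w"
    using x y z w \<open>le z w\<close> \<open>le x w\<close> \<open>le y w\<close> ww by (simp_all add: join_absorb2)
  have c: "meet z (join w w) = z"
    using z w \<open>le z w\<close> ww by (simp add: meet_absorb1)
  have lhs: "meet (meet (join x y) (join z z)) (join w w) = meet (join x y) z"
    using xy z w \<open>le (join x y) w\<close> zz ww
    by (metis meet_absorb1 meet_closed meet_lower1 transitive)
  \<comment> \<open>The Arguesian identity with \<open>a\<^sub>0 = x, b\<^sub>0 = y, a\<^sub>1 = b\<^sub>1 = z, a\<^sub>2 = b\<^sub>2 = w\<close>, where \<open>c = z\<close>.\<close>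
  have "le (meet (meet (join x y) (join z z)) (join w w))
          (join x (meet y (join (meet (meet (join x z) (join y z))
             (join (meet (join z w) (join z w)) (meet (join x w) (join y w)))) z)))"
    using assms x y z w unfolding arguesian_lattice_on_def Let_def by blast
  then show "le (meet (join x y) z) (join x (meet y z))"
    using lhs c0 c1 c2 c ww zz by simp
qed

end

section \<open>Lattices of subspaces are modular and Arguesian\<close>

context vector_space
begin

lemma span_Un_subspaces:
  assumes "subspace A" "subspace B"
  shows "span (A \<union> B) = A + B"
proof -
  have "span A = A" "span B = B" using assms by simp_all
  then show ?thesis unfolding span_Un set_plus_def by blast
qed

lemma subspace_modular_law:
  assumes "subspace C" and "A \<subseteq> C"
  shows "A + (B \<inter> C) = (A + B) \<inter> C"
proof (intro set_eqI iffI)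
  fix v assume "v \<in> A + (B \<inter> C)"
  then obtain a b where "v = a + b" "a \<in> A" "b \<in> B" "b \<in> C" by (auto elim: set_plus_elim)
  then show "v \<in> (A + B) \<inter> C" using assms by (auto intro: subspace_add)
next
  fix v assume v: "v \<in> (A + B) \<inter> C"
  then obtain a b where ab: "v = a + b" "a \<in> A" "b \<in> B" by (auto elim: set_plus_elim)
  have "v - a \<in> C" using assms v ab(2) by (blast intro: subspace_diff)
  then have "b \<in> C" using ab(1) by simp
  then show "v \<in> A + (B \<inter> C)" using ab by auto
qed

lemma subspace_arguesian:
  fixes A\<^sub>0 A\<^sub>1 A\<^sub>2 B\<^sub>0 B\<^sub>1 B\<^sub>2 :: "'b set"
  assumes "subspace A\<^sub>0" "subspace A\<^sub>2" "subspace B\<^sub>1" "subspace B\<^sub>2"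
  defines "C \<equiv> ((A\<^sub>0 + A\<^sub>1) \<inter> (B\<^sub>0 + B\<^sub>1)) \<inter> ((A\<^sub>1 + A\<^sub>2) \<inter> (B\<^sub>1 + B\<^sub>2) + (A\<^sub>0 + A\<^sub>2) \<inter> (B\<^sub>0 + B\<^sub>2))"
  shows "(A\<^sub>0 + B\<^sub>0) \<inter> (A\<^sub>1 + B\<^sub>1) \<inter> (A\<^sub>2 + B\<^sub>2) \<subseteq> A\<^sub>0 + (B\<^sub>0 \<inter> (C + B\<^sub>1))"
proof
  fix x assume "x \<in> (A\<^sub>0 + B\<^sub>0) \<inter> (A\<^sub>1 + B\<^sub>1) \<inter> (A\<^sub>2 + B\<^sub>2)"
  then have "x \<in> A\<^sub>0 + B\<^sub>0" "x \<in> A\<^sub>1 + B\<^sub>1" "x \<in> A\<^sub>2 + B\<^sub>2" by simp_all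
  then obtain a\<^sub>0 b\<^sub>0 a\<^sub>1 b\<^sub>1 a\<^sub>2 b\<^sub>2
    where x: "x = a\<^sub>0 + b\<^sub>0" "x = a\<^sub>1 + b\<^sub>1" "x = a\<^sub>2 + b\<^sub>2"
      and mem: "a\<^sub>0 \<in> A\<^sub>0" "b\<^sub>0 \<in> B\<^sub>0" "a\<^sub>1 \<in> A\<^sub>1" "b\<^sub>1 \<in> B\<^sub>1" "a\<^sub>2 \<in> A\<^sub>2" "b\<^sub>2 \<in> B\<^sub>2"
    by (elim set_plus_elim) blast
  have neg: "- a\<^sub>0 \<in> A\<^sub>0" "- a\<^sub>2 \<in> A\<^sub>2" "- b\<^sub>1 \<in> B\<^sub>1" "- b\<^sub>2 \<in> B\<^sub>2"
    using assms mem by (auto intro: subspace_neg)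
  \<comment> \<open>\<open>a\<^sub>1 - a\<^sub>0 = b\<^sub>0 - b\<^sub>1\<close> lies in \<open>C\<close>, and \<open>b\<^sub>0 = (a\<^sub>1 - a\<^sub>0) + b\<^sub>1\<close>.\<close>
  have eq: "a\<^sub>1 - a\<^sub>0 = b\<^sub>0 - b\<^sub>1" "a\<^sub>1 - a\<^sub>2 = b\<^sub>2 - b\<^sub>1" "a\<^sub>2 - a\<^sub>0 = b\<^sub>0 - b\<^sub>2"
    using x by (simp_all add: algebra_simps)
  have "a\<^sub>1 - a\<^sub>0 \<in> (A\<^sub>0 + A\<^sub>1) \<inter> (B\<^sub>0 + B\<^sub>1)"
    using set_plus_intro[OF neg(1) mem(3)] set_plus_intro[OF mem(2) neg(3)] eq by simp
  moreover have "a\<^sub>1 - a\<^sub>2 \<in> (A\<^sub>1 + A\<^sub>2) \<inter> (B\<^sub>1 + B\<^sub>2)"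
    using set_plus_intro[OF mem(3) neg(2)] set_plus_intro[OF neg(3) mem(6)] eq by simp
  moreover have "a\<^sub>2 - a\<^sub>0 \<in> (A\<^sub>0 + A\<^sub>2) \<inter> (B\<^sub>0 + B\<^sub>2)"
    using set_plus_intro[OF neg(1) mem(5)] set_plus_intro[OF mem(2) neg(4)] eq by simp
  ultimately have "a\<^sub>1 - a\<^sub>0 \<in> C"
    unfolding C_def using set_plus_intro[of "a\<^sub>1 - a\<^sub>2" _ "a\<^sub>2 - a\<^sub>0"] by fastforce
  moreover have "b\<^sub>0 = (a\<^sub>1 - a\<^sub>0) + b\<^sub>1"
    using eq(1) by simp
  ultimately have "b\<^sub>0 \<in> C + B\<^sub>1"
    using set_plus_intro[OF _ mem(4)] by metis
  then show "x \<in> A\<^sub>0 + (B\<^sub>0 \<inter> (C + B\<^sub>1))"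
    using x mem by auto
qed

end

context lattice_on
begin

context
  fixes scale :: "'f::field \<Rightarrow> 'v::ab_group_add \<Rightarrow> 'v" and \<phi> :: "'a \<Rightarrow> 'v set"
  assumes vector_space: "vector_space scale"
    and embedding: "subspace_lattice_embedding scale S le \<phi>"
begin

interpretation V: vector_space scale by (rule vector_space)

lemma embedding_subspace: "x \<in> S \<Longrightarrow> V.subspace (\<phi> x)"
  using embedding unfolding subspace_lattice_embedding_def by blast

lemma embedding_meet: "x \<in> S \<Longrightarrow> y \<in> S \<Longrightarrow> \<phi> (meet x y) = \<phi> x \<inter> \<phi> y"
  using embedding unfolding subspace_lattice_embedding_def by blast

lemma embedding_join: "x \<in> S \<Longrightarrow> y \<in> S \<Longrightarrow> \<phi> (join x y) = \<phi> x + \<phi> y"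
  using embedding embedding_subspace V.span_Un_subspaces
  unfolding subspace_lattice_embedding_def by metis

lemma embedding_le_iff: "x \<in> S \<Longrightarrow> y \<in> S \<Longrightarrow> le x y \<longleftrightarrow> \<phi> x \<subseteq> \<phi> y"
proof
  assume "x \<in> S" "y \<in> S" "le x y"
  then show "\<phi> x \<subseteq> \<phi> y" using embedding_meet meet_absorb1 by (metis Int_lower2)
next
  assume xy: "x \<in> S" "y \<in> S" and "\<phi> x \<subseteq> \<phi> y"
  then have "\<phi> (meet x y) = \<phi> x" by (simp add: embedding_meet Int_absorb2)
  then have "meet x y = x"
    using embedding xy meet_closed unfolding subspace_lattice_embedding_def inj_on_def by blast
  then show "le x y" using xy meet_lower2 by metis
qed

lemma modular_if_subspace_embedding: "modular_lattice_on S le"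
  unfolding modular_lattice_on_def
proof (intro conjI lattice ballI impI)
  fix x y z assume S: "x \<in> S" "y \<in> S" "z \<in> S" and "le x z"
  then have "\<phi> (join x (meet y z)) = \<phi> (meet (join x y) z)"
    using V.subspace_modular_law[OF embedding_subspace]
    by (simp add: embedding_join embedding_meet join_closed meet_closed embedding_le_iff)
  then show "join x (meet y z) = meet (join x y) z"
    using embedding S unfolding subspace_lattice_embedding_def inj_on_def
    by (simp add: join_closed meet_closed)
qed

lemma arguesian_if_subspace_embedding: "arguesian_lattice_on S le"
  unfolding arguesian_lattice_on_def Let_def
proof (intro conjI lattice ballI)
  fix a\<^sub>0 a\<^sub>1 a\<^sub>2 b\<^sub>0 b\<^sub>1 b\<^sub>2
  assume S: "a\<^sub>0 \<in> S" "a\<^sub>1 \<in> S" "a\<^sub>2 \<in> S" "b\<^sub>0 \<in> S" "b\<^sub>1 \<in> S" "b\<^sub>2 \<in> S"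
  note closed = join_closed meet_closed
  note hom = embedding_join embedding_meet
  define c where "c = meet (meet (join a\<^sub>0 a\<^sub>1) (join b\<^sub>0 b\<^sub>1))
    (join (meet (join a\<^sub>1 a\<^sub>2) (join b\<^sub>1 b\<^sub>2)) (meet (join a\<^sub>0 a\<^sub>2) (join b\<^sub>0 b\<^sub>2)))"
  have c: "c \<in> S" "\<phi> c = ((\<phi> a\<^sub>0 + \<phi> a\<^sub>1) \<inter> (\<phi> b\<^sub>0 + \<phi> b\<^sub>1)) \<inter>
      ((\<phi> a\<^sub>1 + \<phi> a\<^sub>2) \<inter> (\<phi> b\<^sub>1 + \<phi> b\<^sub>2) + (\<phi> a\<^sub>0 + \<phi> a\<^sub>2) \<inter> (\<phi> b\<^sub>0 + \<phi> b\<^sub>2))"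
    unfolding c_def using S by (simp_all add: closed hom)
  have "\<phi> (meet (meet (join a\<^sub>0 b\<^sub>0) (join a\<^sub>1 b\<^sub>1)) (join a\<^sub>2 b\<^sub>2)) \<subseteq> \<phi> (join a\<^sub>0 (meet b\<^sub>0 (join c b\<^sub>1)))"
    using V.subspace_arguesian[OF embedding_subspace embedding_subspace embedding_subspace embedding_subspace] S c
    by (simp add: closed hom)
  then have "le (meet (meet (join a\<^sub>0 b\<^sub>0) (join a\<^sub>1 b\<^sub>1)) (join a\<^sub>2 b\<^sub>2)) (join a\<^sub>0 (meet b\<^sub>0 (join c b\<^sub>1)))"
    using S c by (simp add: closed embedding_le_iff)
  then show "le (meet (meet (join a\<^sub>0 b\<^sub>0) (join a\<^sub>1 b\<^sub>1)) (join a\<^sub>2 b\<^sub>2)) (join a\<^sub>0 (meet b\<^sub>0 (join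
    (meet (meet (join a\<^sub>0 a\<^sub>1) (join b\<^sub>0 b\<^sub>1))
      (join (meet (join a\<^sub>1 a\<^sub>2) (join b\<^sub>1 b\<^sub>2)) (meet (join a\<^sub>0 a\<^sub>2) (join b\<^sub>0 b\<^sub>2)))) b\<^sub>1)))"
    by (simp only: c_def)
qed

end

end

section \<open>Schmidt's lattice \<open>M\<^sub>3[L]\<close>\<close>

lemma le3_eq_less_eq: "le3 = (\<le>)"
  by (simp add: le3_def fun_eq_iff split: prod.splits)

lemma M3_iff [simp]: "(a, b, c) \<in> M3 \<longleftrightarrow> a \<sqinter> b = a \<sqinter> c \<and> a \<sqinter> c = b \<sqinter> c"
  by (simp add: M3_def balanced_def)

lemma poset_on_M3: "poset_on (M3 :: ('a::lattice \<times> 'a \<times> 'a) set) (\<le>)"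
  by unfold_locales auto

lemma inf_in_M3:
  assumes "s \<in> M3" "t \<in> M3"
  shows "s \<sqinter> t \<in> M3"
proof -
  obtain a b c a' b' c' where s: "s = (a, b, c)" and t: "t = (a', b', c')" by (cases s, cases t)
  have swap: "(p \<sqinter> p') \<sqinter> (q \<sqinter> q') = (p \<sqinter> q) \<sqinter> (p' \<sqinter> q')" for p p' q q' :: 'a
    by (simp add: inf_aci)
  show ?thesis
    using assms unfolding s t inf_Pair_Pair M3_iff
      swap[of a a' b b'] swap[of a a' c c'] swap[of b b' c c'] by simp
qed

lemma pmeet_M3: "s \<in> M3 \<Longrightarrow> t \<in> M3 \<Longrightarrow> pmeet M3 (\<le>) s t = s \<sqinter> t"
  by (rule poset_on.pmeet_eqI[OF poset_on_M3]) (auto simp: is_glb_in_def inf_in_M3)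

lemma pjoin_M3_if_sup_in_M3: "s \<in> M3 \<Longrightarrow> t \<in> M3 \<Longrightarrow> s \<squnion> t \<in> M3 \<Longrightarrow> pjoin M3 (\<le>) s t = s \<squnion> t"
  by (rule poset_on.pjoin_eqI[OF poset_on_M3]) (auto simp: is_lub_in_def)

definition balanced_closure :: "'a::lattice \<times> 'a \<times> 'a \<Rightarrow> 'a \<times> 'a \<times> 'a" where
  "balanced_closure t = (case t of (a, b, c) \<Rightarrow> (a \<squnion> (b \<sqinter> c), b \<squnion> (a \<sqinter> c), c \<squnion> (a \<sqinter> b)))"

lemma balanced_closure_simp [simp]:
  "balanced_closure (a, b, c) = (a \<squnion> (b \<sqinter> c), b \<squnion> (a \<sqinter> c), c \<squnion> (a \<sqinter> b))"
  by (simp add: balanced_closure_def)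

lemma balanced_closure_upper: "t \<le> balanced_closure t"
  by (cases t) auto

lemma balanced_closure_least:
  assumes "w \<in> M3" and "t \<le> w"
  shows "balanced_closure t \<le> w"
proof -
  obtain a b c p q r where t: "t = (a, b, c)" and w: "w = (p, q, r)" by (cases t, cases w)
  have "q \<sqinter> r \<le> p" "p \<sqinter> r \<le> q" "p \<sqinter> q \<le> r"
    using assms(1) unfolding w by (metis M3_iff inf_le1 inf_le2)+
  then show ?thesis using assms(2) unfolding t w
    by (auto intro: order_trans[OF inf_mono])
qed

lemma balanced_closure_in_M3:
  assumes "class.distrib_lattice inf (\<le>) (<) (sup :: 'a::lattice \<Rightarrow> 'a \<Rightarrow> 'a)"
  shows "balanced_closure (t :: 'a \<times> 'a \<times> 'a) \<in> M3"
proof -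
  obtain a b c where t: "t = (a, b, c)" by (cases t)
  have "(a \<squnion> (b \<sqinter> c)) \<sqinter> (b \<squnion> (a \<sqinter> c)) = (a \<sqinter> b) \<squnion> (a \<sqinter> c) \<squnion> (b \<sqinter> c)"
    "(a \<squnion> (b \<sqinter> c)) \<sqinter> (c \<squnion> (a \<sqinter> b)) = (a \<sqinter> b) \<squnion> (a \<sqinter> c) \<squnion> (b \<sqinter> c)"
    "(b \<squnion> (a \<sqinter> c)) \<sqinter> (c \<squnion> (a \<sqinter> b)) = (a \<sqinter> b) \<squnion> (a \<sqinter> c) \<squnion> (b \<sqinter> c)"
    using median_eq[OF assms, of a b c] median_eq[OF assms, of a c b] median_eq[OF assms, of b c a]
    by (simp_all add: inf_commute sup_aci)
  then show ?thesis unfolding t by simp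
qed

context
  assumes distrib: "class.distrib_lattice inf (\<le>) (<) (sup :: 'a::lattice \<Rightarrow> 'a \<Rightarrow> 'a)"
begin

lemma pjoin_M3: "pjoin M3 (\<le>) s t = balanced_closure (s \<squnion> t :: 'a \<times> 'a \<times> 'a)"
  by (rule poset_on.pjoin_eqI[OF poset_on_M3])
    (auto simp: is_lub_in_def balanced_closure_in_M3[OF distrib] balanced_closure_least
      intro: order_trans[OF _ balanced_closure_upper])

lemma lattice_on_M3: "lattice_on (M3 :: ('a \<times> 'a \<times> 'a) set) (\<le>)"
proof -
  have "is_lub_in M3 (\<le>) s t (balanced_closure (s \<squnion> t))" for s t :: "'a \<times> 'a \<times> 'a"
    by (auto simp: is_lub_in_def balanced_closure_in_M3[OF distrib] balanced_closure_least
      intro: order_trans[OF _ balanced_closure_upper])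
  moreover have "is_glb_in M3 (\<le>) s t (s \<sqinter> t)" if "s \<in> M3" "t \<in> M3" for s t :: "'a \<times> 'a \<times> 'a"
    using that by (auto simp: is_glb_in_def inf_in_M3)
  ultimately show ?thesis
    using poset_on_M3 unfolding lattice_on_def lattice_on_axioms_def is_lattice_on_def by blast
qed

end

lemma modular_law_if_M3_modular_inequality:
  assumes ineq: "modular_inequality_on (M3 :: ('a::lattice \<times> 'a \<times> 'a) set) (\<le>)" and "a \<le> c"
  shows "a \<squnion> (b \<sqinter> c) = (a \<squnion> b) \<sqinter> (c :: 'a)"
proof (rule antisym)
  have diag: "(u, u, u) \<in> M3" for u :: 'a by simp
  have "(a, a, a) \<le> (c, c, c)" using \<open>a \<le> c\<close> by simp
  then have "pmeet M3 (\<le>) (pjoin M3 (\<le>) (a, a, a) (b, b, b)) (c, c, c)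
      \<le> pjoin M3 (\<le>) (a, a, a) (pmeet M3 (\<le>) (b, b, b) (c, c, c))"
    using ineq diag unfolding modular_inequality_on_def by blast
  then show "(a \<squnion> b) \<sqinter> c \<le> a \<squnion> (b \<sqinter> c)"
    by (simp add: pmeet_M3 pjoin_M3_if_sup_in_M3 diag del: M3_iff)
  show "a \<squnion> (b \<sqinter> c) \<le> (a \<squnion> b) \<sqinter> c"
    using \<open>a \<le> c\<close> by (simp add: le_infI1 le_infI2 sup.coboundedI2)
qed

lemma M3_modular_inequality_diamond_bound:
  fixes d x y z :: "'a::lattice"
  assumes lattice: "lattice_on (M3 :: ('a \<times> 'a \<times> 'a) set) (\<le>)"
    and ineq: "modular_inequality_on (M3 :: ('a \<times> 'a \<times> 'a) set) (\<le>)"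
    and above: "d \<le> x" "d \<le> y" "d \<le> z"
    and meets: "x \<sqinter> y = d" "x \<sqinter> z = d" "z \<sqinter> y = d"
  shows "y \<sqinter> (x \<squnion> z) \<le> d"
proof -
  interpret M: lattice_on "M3 :: ('a \<times> 'a \<times> 'a) set" "(\<le>)" by (rule lattice)
  \<comment> \<open>\<open>X \<le> Z\<close> and \<open>X \<squnion> (Y \<sqinter> Z) = X\<close>, whereas the middle entry of \<open>(X \<squnion> Y) \<sqinter> Z\<close> is at least
    \<open>y \<sqinter> (x \<squnion> z)\<close>, because a balanced triple above \<open>(x, z, x)\<close> has middle entry above \<open>x \<squnion> z\<close>.\<close>
  define X Y Z where "X = (d, d, x)" and "Y = (x, z, d)" and "Z = (d, y, x)"
  have in_M3: "X \<in> M3" "Y \<in> M3" "Z \<in> M3" "(d, d, d) \<in> M3"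
    unfolding X_def Y_def Z_def using above meets by (simp_all add: inf.absorb1 inf.absorb2 inf_commute)
  have "X \<le> Z" unfolding X_def Z_def using above by simp
  have "M.meet Y Z = (d, d, d)"
    using in_M3 above meets by (simp add: pmeet_M3 inf.absorb1 inf.absorb2 Y_def Z_def del: M3_iff)
  then have "M.join X (M.meet Y Z) = X"
    using in_M3 above by (simp add: M.join_absorb1 X_def)
  obtain p q r where pqr: "M.join X Y = (p, q, r)" by (cases "M.join X Y")
  then have "(p, q, r) \<in> M3" "X \<le> (p, q, r)" "Y \<le> (p, q, r)"
    using in_M3 M.join_closed M.join_upper1 M.join_upper2 by metis+
  then have "x \<le> p" "x \<le> r" "z \<le> q" and "p \<sqinter> r = q \<sqinter> r" unfolding X_def Y_def by simp_all
  then have "x \<squnion> z \<le> q" by (metis inf_le1 le_inf_iff sup_least)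
  have "M.meet (M.join X Y) Z \<le> M.join X (M.meet Y Z)"
    using ineq in_M3 \<open>X \<le> Z\<close> unfolding modular_inequality_on_def by blast
  then have "q \<sqinter> y \<le> d"
    using pqr in_M3 \<open>(p, q, r) \<in> M3\<close> \<open>M.join X (M.meet Y Z) = X\<close>
    by (simp add: pmeet_M3 X_def Z_def del: M3_iff)
  then show ?thesis using \<open>x \<squnion> z \<le> q\<close> by (metis inf_commute inf_mono order_refl order_trans)
qed

lemma diamonds_collapse_if_M3_modular_inequality:
  fixes x y z :: "'a::lattice"
  assumes lattice: "lattice_on (M3 :: ('a \<times> 'a \<times> 'a) set) (\<le>)"
    and ineq: "modular_inequality_on (M3 :: ('a \<times> 'a \<times> 'a) set) (\<le>)"
    and modular: "\<And>a b c :: 'a. a \<le> c \<Longrightarrow> a \<squnion> (b \<sqinter> c) = (a \<squnion> b) \<sqinter> c"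
  shows "y \<sqinter> ((x \<squnion> y) \<sqinter> (y \<squnion> z) \<sqinter> (z \<squnion> x)) \<le> (x \<sqinter> y) \<squnion> (y \<sqinter> z) \<squnion> (z \<sqinter> x)"
proof -
  define d where "d = (x \<sqinter> y) \<squnion> (y \<sqinter> z) \<squnion> (z \<sqinter> x)"
  define e where "e = (x \<squnion> y) \<sqinter> (y \<squnion> z) \<sqinter> (z \<squnion> x)"
  define x' where "x' = (x \<sqinter> e) \<squnion> d"
  define y' where "y' = (y \<sqinter> e) \<squnion> d"
  define z' where "z' = (z \<sqinter> e) \<squnion> d"
  have "x' \<sqinter> y' = d" "x' \<sqinter> z' = d" "z' \<sqinter> y' = d"
    using modular_diamond_inf[OF modular, of x y z] modular_diamond_inf[OF modular, of x z y]
      modular_diamond_inf[OF modular, of z y x]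
    unfolding d_def e_def x'_def y'_def z'_def by (simp_all add: inf_aci sup_aci)
  moreover have "d \<le> e" unfolding d_def e_def by (auto intro: le_supI1 le_supI2 le_infI1 le_infI2)
  then have "d \<le> x'" "d \<le> y'" "d \<le> z'" "y' \<le> e" by (simp_all add: x'_def y'_def z'_def)
  ultimately have "y' \<sqinter> (x' \<squnion> z') \<le> d"
    by (intro M3_modular_inequality_diamond_bound[OF lattice ineq])
  moreover have "e \<le> x' \<squnion> z'"
    using modular_diamond_sup[OF modular, of x z y] unfolding e_def x'_def z'_def
    by (simp add: inf_aci sup_aci le_supI1 le_supI2)
  ultimately have "y' \<le> d" using \<open>y' \<le> e\<close> by (metis inf.absorb1 order_trans)
  then show ?thesis unfolding y'_def d_def e_def by simp
qed

lemma distributive_if_M3_modular_inequality: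
  assumes "lattice_on (M3 :: ('a::lattice \<times> 'a \<times> 'a) set) (\<le>)"
    and "modular_inequality_on (M3 :: ('a \<times> 'a \<times> 'a) set) (\<le>)"
  shows "distributive_lattice TYPE('a)"
  using distributive_if_diamonds_collapse diamonds_collapse_if_M3_modular_inequality
    modular_law_if_M3_modular_inequality assms by metis

section \<open>Prime filters of a distributive lattice\<close>

definition lattice_filter :: "'a::lattice set \<Rightarrow> bool" where
  "lattice_filter F \<longleftrightarrow> (\<forall>x\<in>F. \<forall>y. x \<le> y \<longrightarrow> y \<in> F) \<and> (\<forall>x\<in>F. \<forall>y\<in>F. x \<sqinter> y \<in> F)"

text \<open>Improper prime filters (\<open>{}\<close> and \<open>UNIV\<close>) are allowed: these are exactly the preimages
  of \<open>True\<close> under lattice homomorphisms into \<open>bool\<close>.\<close>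
definition prime_filter :: "'a::lattice set \<Rightarrow> bool" where
  "prime_filter P \<longleftrightarrow> (\<forall>x y. x \<sqinter> y \<in> P \<longleftrightarrow> x \<in> P \<and> y \<in> P) \<and> (\<forall>x y. x \<squnion> y \<in> P \<longleftrightarrow> x \<in> P \<or> y \<in> P)"

lemma prime_filter_inf_iff [simp]: "prime_filter P \<Longrightarrow> x \<sqinter> y \<in> P \<longleftrightarrow> x \<in> P \<and> y \<in> P"
  and prime_filter_sup_iff [simp]: "prime_filter P \<Longrightarrow> x \<squnion> y \<in> P \<longleftrightarrow> x \<in> P \<or> y \<in> P"
  by (simp_all add: prime_filter_def)

lemma maximal_filter_avoiding:
  fixes a b :: "'a::lattice"
  assumes "\<not> a \<le> b"
  obtains M where "lattice_filter M" "a \<in> M" "b \<notin> M"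
    and "\<And>F. lattice_filter F \<Longrightarrow> b \<notin> F \<Longrightarrow> M \<subseteq> F \<Longrightarrow> F = M"
proof -
  define \<A> where "\<A> = {F. lattice_filter F \<and> a \<in> F \<and> b \<notin> F}"
  have "{x. a \<le> x} \<in> \<A>"
    using assms unfolding \<A>_def lattice_filter_def by (auto intro: order_trans)
  moreover have "\<Union>\<C> \<in> \<A>" if "\<C> \<noteq> {}" and "subset.chain \<A> \<C>" for \<C>
  proof -
    have \<C>: "\<C> \<subseteq> \<A>" "\<And>X Y. X \<in> \<C> \<Longrightarrow> Y \<in> \<C> \<Longrightarrow> X \<subseteq> Y \<or> Y \<subseteq> X"
      using that(2) unfolding subset_chain_def by auto
    have "x \<sqinter> y \<in> \<Union>\<C>" if "x \<in> X" "y \<in> Y" "X \<in> \<C>" "Y \<in> \<C>" for x y X Y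
      using \<C>(2)[OF that(3,4)] \<C>(1) that unfolding \<A>_def lattice_filter_def by blast
    then show ?thesis
      using \<C>(1) \<open>\<C> \<noteq> {}\<close> unfolding \<A>_def lattice_filter_def by blast
  qed
  ultimately obtain M where "M \<in> \<A>" and "\<forall>X\<in>\<A>. M \<subseteq> X \<longrightarrow> X = M"
    using subset_Zorn_nonempty[of \<A>] by blast
  then show ?thesis using that unfolding \<A>_def by blast
qed

lemma lattice_filter_adjoin:
  assumes "lattice_filter M"
  shows "lattice_filter {z. \<exists>f\<in>M. f \<sqinter> t \<le> z}"
  unfolding lattice_filter_def
proof (intro conjI ballI allI impI)
  fix x y assume "x \<in> {z. \<exists>f\<in>M. f \<sqinter> t \<le> z}" "y \<in> {z. \<exists>f\<in>M. f \<sqinter> t \<le> z}"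
  then obtain f g where fg: "f \<in> M" "g \<in> M" "f \<sqinter> t \<le> x" "g \<sqinter> t \<le> y" by blast
  have "(f \<sqinter> g) \<sqinter> t \<le> f \<sqinter> t" "(f \<sqinter> g) \<sqinter> t \<le> g \<sqinter> t"
    by (intro inf_mono; simp)+
  then have "(f \<sqinter> g) \<sqinter> t \<le> x \<sqinter> y" using fg(3,4) by (meson le_infI order_trans)
  moreover have "f \<sqinter> g \<in> M" using fg(1,2) assms unfolding lattice_filter_def by blast
  ultimately show "x \<sqinter> y \<in> {z. \<exists>f\<in>M. f \<sqinter> t \<le> z}" by blast
qed (auto intro: order_trans)

lemma prime_if_maximal_filter_avoiding:
  assumes distrib: "class.distrib_lattice inf (\<le>) (<) (sup :: 'a::lattice \<Rightarrow> 'a \<Rightarrow> 'a)"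
    and M: "lattice_filter M" "a \<in> M" "b \<notin> M"
    and maximal: "\<And>F. lattice_filter F \<Longrightarrow> b \<notin> F \<Longrightarrow> M \<subseteq> F \<Longrightarrow> F = M"
  shows "prime_filter (M :: 'a set)"
proof -
  interpret D: distrib_lattice "inf :: 'a \<Rightarrow> 'a \<Rightarrow> 'a" "(\<le>)" "(<)" sup by (rule distrib)
  have up: "\<And>x y. x \<in> M \<Longrightarrow> x \<le> y \<Longrightarrow> y \<in> M" and inf: "\<And>x y. x \<in> M \<Longrightarrow> y \<in> M \<Longrightarrow> x \<sqinter> y \<in> M"
    using M(1) unfolding lattice_filter_def by blast+
  \<comment> \<open>Adjoining \<open>t \<notin> M\<close> to \<open>M\<close> generates a filter that, by maximality, contains \<open>b\<close>.\<close>
  have below_b: "\<exists>f\<in>M. f \<sqinter> t \<le> b" if "t \<notin> M" for t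
  proof (rule ccontr)
    assume "\<not> (\<exists>f\<in>M. f \<sqinter> t \<le> b)"
    moreover define G where "G = {z. \<exists>f\<in>M. f \<sqinter> t \<le> z}"
    moreover have "lattice_filter G" unfolding G_def using M(1) by (rule lattice_filter_adjoin)
    moreover have "M \<subseteq> G" unfolding G_def by (auto intro: le_infI1)
    ultimately have "G = M" using maximal by blast
    moreover have "t \<in> G" unfolding G_def using M(2) inf_le2 by blast
    ultimately show False using that by simp
  qed
  have "x \<in> M \<or> y \<in> M" if "x \<squnion> y \<in> M" for x y
  proof (rule ccontr)
    assume "\<not> (x \<in> M \<or> y \<in> M)"
    then obtain f g where "f \<in> M" "f \<sqinter> x \<le> b" "g \<in> M" "g \<sqinter> y \<le> b" using below_b by blast
    define h where "h = f \<sqinter> g \<sqinter> (x \<squnion> y)"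
    have "h \<in> M" unfolding h_def using \<open>f \<in> M\<close> \<open>g \<in> M\<close> that inf by blast
    have "h = h \<sqinter> (x \<squnion> y)" unfolding h_def by (simp add: inf.absorb1)
    also have "\<dots> = (h \<sqinter> x) \<squnion> (h \<sqinter> y)" by (rule D.inf_sup_distrib1)
    also have "\<dots> \<le> b"
      using \<open>f \<sqinter> x \<le> b\<close> \<open>g \<sqinter> y \<le> b\<close> unfolding h_def
      by (meson inf_le1 inf_le2 le_infI1 le_infI2 order_trans sup_least inf_mono order_refl)
    finally show False using \<open>h \<in> M\<close> \<open>b \<notin> M\<close> up by blast
  qed
  then show ?thesis
    unfolding prime_filter_def using up inf by (meson sup_ge1 sup_ge2 inf_le1 inf_le2)
qed

lemma eq_if_same_prime_filters:
  assumes distrib: "class.distrib_lattice inf (\<le>) (<) (sup :: 'a::lattice \<Rightarrow> 'a \<Rightarrow> 'a)"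
    and same: "\<And>P. prime_filter P \<Longrightarrow> a \<in> P \<longleftrightarrow> b \<in> P"
  shows "a = (b :: 'a)"
proof -
  have "x \<le> y" if "\<And>P. prime_filter P \<Longrightarrow> x \<in> P \<longleftrightarrow> y \<in> P" for x y :: 'a
  proof (rule ccontr)
    assume "\<not> x \<le> y"
    then obtain M where "lattice_filter M" "x \<in> M" "y \<notin> M"
      and "\<And>F. lattice_filter F \<Longrightarrow> y \<notin> F \<Longrightarrow> M \<subseteq> F \<Longrightarrow> F = M"
      using maximal_filter_avoiding by metis
    then have "prime_filter M" by (rule prime_if_maximal_filter_avoiding[OF distrib])
    then show False using that \<open>x \<in> M\<close> \<open>y \<notin> M\<close> by blast
  qed
  then show ?thesis using same by (blast intro: antisym)
qed

section \<open>Embedding \<open>M\<^sub>3[L]\<close> into a lattice of subspaces\<close>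

definition member3 :: "'a set \<Rightarrow> 'a \<times> 'a \<times> 'a \<Rightarrow> bool \<times> bool \<times> bool" where
  "member3 P t = (case t of (a, b, c) \<Rightarrow> (a \<in> P, b \<in> P, c \<in> P))"

lemma member3_simp [simp]: "member3 P (a, b, c) = (a \<in> P, b \<in> P, c \<in> P)"
  by (simp add: member3_def)

lemma member3_inf: "prime_filter P \<Longrightarrow> member3 P (s \<sqinter> t) = member3 P s \<sqinter> member3 P t"
  by (cases s; cases t) (simp add: inf_bool_def)

lemma member3_balanced_closure_sup:
  "prime_filter P \<Longrightarrow> member3 P (balanced_closure (s \<squnion> t)) = balanced_closure (member3 P s \<squnion> member3 P t)"
  by (cases s; cases t) (simp add: inf_bool_def sup_bool_def)

lemma member3_in_M3:
  assumes "prime_filter P" and "t \<in> M3"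
  shows "member3 P t \<in> M3"
proof -
  obtain a b c where t: "t = (a, b, c)" by (cases t)
  have "a \<sqinter> b \<in> P \<longleftrightarrow> a \<sqinter> c \<in> P" "a \<sqinter> c \<in> P \<longleftrightarrow> b \<sqinter> c \<in> P"
    using assms(2) unfolding t by simp_all
  then show ?thesis using assms(1) unfolding t by (simp add: inf_bool_def)
qed

text \<open>\<open>M\<^sub>3[bool]\<close> is the five-element lattice \<open>M\<^sub>3\<close>; \<open>diamond\<close> realises it by the subspaces \<open>0\<close>,
  \<open>y = 0\<close>, \<open>x = 0\<close>, \<open>x = y\<close> and \<open>F\<^sup>2\<close> of \<open>F\<^sup>2\<close>.\<close>
definition diamond :: "bool \<times> bool \<times> bool \<Rightarrow> ('f::field \<times> 'f) set" where
  "diamond t = (case t of (\<alpha>, \<beta>, \<gamma>) \<Rightarrow> {(x, y). (\<alpha> \<and> \<beta>) \<or> (\<alpha> \<and> \<gamma>) \<or> (\<beta> \<and> \<gamma>) \<or>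
     (\<alpha> \<and> y = 0) \<or> (\<beta> \<and> x = 0) \<or> (\<gamma> \<and> x = y) \<or> (x = 0 \<and> y = 0)})"

lemma zero_in_diamond [simp]: "(0, 0) \<in> diamond t"
  by (auto simp: diamond_def split: prod.splits)

lemma diamond_add: "(x, y) \<in> diamond t \<Longrightarrow> (x', y') \<in> diamond t \<Longrightarrow> (x + x', y + y') \<in> diamond t"
  by (cases t) (auto simp: diamond_def)

lemma diamond_scale: "(x, y) \<in> diamond t \<Longrightarrow> (c * x, c * y) \<in> diamond t"
  by (auto simp: diamond_def split: prod.splits)

lemma diamond_mono: "(\<alpha>, \<beta>, \<gamma>) \<le> (\<alpha>', \<beta>', \<gamma>') \<Longrightarrow> diamond (\<alpha>, \<beta>, \<gamma>) \<subseteq> diamond (\<alpha>', \<beta>', \<gamma>')"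
  by (auto simp: diamond_def)

lemma diamond_inf:
  assumes "s \<in> M3" "t \<in> M3"
  shows "diamond (s \<sqinter> t) = diamond s \<inter> diamond t"
  using assms
  by (cases s; cases t) (auto simp: diamond_def inf_bool_def split: bool.splits)

lemma diamond_balanced_closure_sup:
  assumes "s \<in> M3" "t \<in> M3"
  shows "diamond (balanced_closure (s \<squnion> t)) = diamond s + (diamond t :: ('f::field \<times> 'f) set)"
proof -
  obtain \<alpha> \<beta> \<gamma> \<alpha>' \<beta>' \<gamma>' where s: "s = (\<alpha>, \<beta>, \<gamma>)" and t: "t = (\<alpha>', \<beta>', \<gamma>')"
    by (cases s, cases t)
  have join_sub: "(x, y) \<in> diamond s + diamond t" if "(x, y) \<in> diamond (balanced_closure (s \<squnion> t))" for x y :: 'f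
  proof -
    have "((x, y) \<in> diamond s \<and> (0, 0) \<in> diamond t) \<or> ((0, 0) \<in> diamond s \<and> (x, y) \<in> diamond t)
      \<or> ((x, 0) \<in> diamond s \<and> (0, y) \<in> diamond t) \<or> ((0, y) \<in> diamond s \<and> (x, 0) \<in> diamond t)
      \<or> ((x - y, 0) \<in> diamond s \<and> (y, y) \<in> diamond t) \<or> ((y, y) \<in> diamond s \<and> (x - y, 0) \<in> diamond t)
      \<or> ((0, y - x) \<in> diamond s \<and> (x, x) \<in> diamond t) \<or> ((x, x) \<in> diamond s \<and> (0, y - x) \<in> diamond t)"
      using assms that unfolding s t
      by (cases \<alpha>; cases \<beta>; cases \<gamma>; cases \<alpha>'; cases \<beta>'; cases \<gamma>') (simp_all add: diamond_def)
    moreover have "(x, y) = (x, y) + (0, 0)" "(x, y) = (0, 0) + (x, y)" "(x, y) = (x, 0) + (0, y)"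
      "(x, y) = (0, y) + (x, 0)" "(x, y) = (x - y, 0) + (y, y)" "(x, y) = (y, y) + (x - y, 0)"
      "(x, y) = (0, y - x) + (x, x)" "(x, y) = (x, x) + (0, y - x)"
      by simp_all
    ultimately show ?thesis unfolding set_plus_def by blast
  qed
  have "diamond s \<subseteq> diamond (balanced_closure (s \<squnion> t))" "diamond t \<subseteq> diamond (balanced_closure (s \<squnion> t))"
    unfolding s t by (auto intro!: diamond_mono simp: sup_bool_def inf_bool_def)
  then show ?thesis
  proof (intro equalityI subsetI)
    fix v :: "'f \<times> 'f" assume "v \<in> diamond (balanced_closure (s \<squnion> t))"
    then show "v \<in> diamond s + diamond t" using join_sub by (cases v) simp
  next
    fix v :: "'f \<times> 'f" assume "v \<in> diamond s + diamond t"
    then obtain p q where "v = p + q" "p \<in> diamond s" "q \<in> diamond t" by (rule set_plus_elim)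
    moreover have "v = (fst p + fst q, snd p + snd q)" using \<open>v = p + q\<close> by (simp add: prod_eq_iff)
    ultimately show "v \<in> diamond (balanced_closure (s \<squnion> t))"
      using \<open>diamond s \<subseteq> _\<close> \<open>diamond t \<subseteq> _\<close> diamond_add[of "fst p" "snd p" "balanced_closure (s \<squnion> t)" "fst q" "snd q"] by auto
  qed
qed

lemma inj_on_diamond: "inj_on (diamond :: _ \<Rightarrow> ('f::field \<times> 'f) set) M3"
proof
  fix s t :: "bool \<times> bool \<times> bool"
  assume "s \<in> M3" "t \<in> M3" and eq: "(diamond s :: ('f \<times> 'f) set) = diamond t"
  have "((1::'f), 0) \<in> diamond u \<longleftrightarrow> fst u" "((0::'f), 1) \<in> diamond u \<longleftrightarrow> fst (snd u)"
    "((1::'f), 1) \<in> diamond u \<longleftrightarrow> snd (snd u)" if "u \<in> M3" for u :: "bool \<times> bool \<times> bool"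
    using that by (auto simp: diamond_def split: prod.splits)
  note points = this[OF \<open>s \<in> M3\<close>] this[OF \<open>t \<in> M3\<close>]
  have "fst s = fst t" "fst (snd s) = fst (snd t)" "snd (snd s) = snd (snd t)"
    using points eq by metis+
  then show "s = t" by (simp add: prod_eq_iff)
qed

text \<open>The coordinates \<open>(P, True)\<close> and \<open>(P, False)\<close> carry the copy of \<open>F\<^sup>2\<close> belonging to the
  prime filter \<open>P\<close>.\<close>
definition prime_filter_embedding :: "'a::lattice \<times> 'a \<times> 'a \<Rightarrow> ('a set \<times> bool \<Rightarrow> 'f::field) set" where
  "prime_filter_embedding t =
     {v. \<forall>P. prime_filter P \<longrightarrow> (v (P, True), v (P, False)) \<in> diamond (member3 P t)}"

lemma subspace_prime_filter_embedding: "module.subspace fscale (prime_filter_embedding t)"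
proof -
  interpret vector_space fscale by (rule vector_space_fscale)
  show ?thesis
    unfolding subspace_def prime_filter_embedding_def by (auto simp: fscale_def diamond_add diamond_scale)
qed

lemma prime_filter_embedding_inf:
  "s \<in> M3 \<Longrightarrow> t \<in> M3 \<Longrightarrow> prime_filter_embedding (s \<sqinter> t) = prime_filter_embedding s \<inter> prime_filter_embedding t"
  by (auto simp: prime_filter_embedding_def member3_inf diamond_inf member3_in_M3)

lemma prime_filter_embedding_balanced_closure_sup:
  assumes "s \<in> M3" "t \<in> M3"
  shows "prime_filter_embedding (balanced_closure (s \<squnion> t))
    = prime_filter_embedding s + (prime_filter_embedding t :: ('a::lattice set \<times> bool \<Rightarrow> 'f::field) set)"
proof -
  have fibre: "diamond (member3 P (balanced_closure (s \<squnion> t))) = diamond (member3 P s) + diamond (member3 P t)"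
    if "prime_filter P" for P
    using that assms by (simp add: member3_balanced_closure_sup diamond_balanced_closure_sup member3_in_M3)
  show ?thesis
  proof (intro equalityI subsetI)
    fix v :: "'a set \<times> bool \<Rightarrow> 'f"
    assume "v \<in> prime_filter_embedding (balanced_closure (s \<squnion> t))"
    then have v: "(v (P, True), v (P, False)) \<in> diamond (member3 P s) + diamond (member3 P t)"
      if "prime_filter P" for P
      using that fibre unfolding prime_filter_embedding_def by blast
    have "\<exists>p q. (v (P, True), v (P, False)) = p + q \<and>
        (prime_filter P \<longrightarrow> p \<in> diamond (member3 P s) \<and> q \<in> diamond (member3 P t))" for P
    proof (cases "prime_filter P")
      case True
      then show ?thesis using v[OF True] by (blast elim: set_plus_elim)
    next
      case False
      then show ?thesis by (intro exI[of _ "(v (P, True), v (P, False))"] exI[of _ 0]) simp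
    qed
    then obtain p q where pq: "\<And>P. (v (P, True), v (P, False)) = p P + q P \<and>
        (prime_filter P \<longrightarrow> p P \<in> diamond (member3 P s) \<and> q P \<in> diamond (member3 P t))"
      by metis
    define u w where "u = (\<lambda>(P, i). if i then fst (p P) else snd (p P))"
      and "w = (\<lambda>(P, i). if i then fst (q P) else snd (q P))"
    have "v = u + w"
    proof
      fix j :: "'a set \<times> bool"
      obtain P i where j: "j = (P, i)" by (cases j)
      show "v j = (u + w) j" using pq[of P] unfolding j by (cases i) (auto simp: u_def w_def prod_eq_iff)
    qed
    moreover have "u \<in> prime_filter_embedding s" "w \<in> prime_filter_embedding t"
      using pq by (simp_all add: prime_filter_embedding_def u_def w_def)
    ultimately show "v \<in> prime_filter_embedding s + prime_filter_embedding t" by blast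
  next
    fix v :: "'a set \<times> bool \<Rightarrow> 'f"
    assume "v \<in> prime_filter_embedding s + prime_filter_embedding t"
    then obtain u w where "v = u + w" "u \<in> prime_filter_embedding s" "w \<in> prime_filter_embedding t"
      by (rule set_plus_elim)
    then show "v \<in> prime_filter_embedding (balanced_closure (s \<squnion> t))"
      unfolding prime_filter_embedding_def using fibre
      by (auto intro!: set_plus_intro[of "(u (_, True), u (_, False))" _ "(w (_, True), w (_, False))", simplified])
  qed
qed

lemma prime_filter_embedding_point:
  fixes x y :: "'f::field"
  assumes "prime_filter P"
  shows "(\<lambda>(Q, i). if Q = P then (if i then x else y) else 0) \<in> prime_filter_embedding t
    \<longleftrightarrow> (x, y) \<in> diamond (member3 P t)"
  using assms by (auto simp: prime_filter_embedding_def)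

lemma inj_on_prime_filter_embedding:
  assumes distrib: "class.distrib_lattice inf (\<le>) (<) (sup :: 'a::lattice \<Rightarrow> 'a \<Rightarrow> 'a)"
  shows "inj_on (prime_filter_embedding :: _ \<Rightarrow> ('a set \<times> bool \<Rightarrow> 'f::field) set) M3"
proof
  fix s t :: "'a \<times> 'a \<times> 'a"
  assume "s \<in> M3" "t \<in> M3" and eq: "(prime_filter_embedding s :: ('a set \<times> bool \<Rightarrow> 'f) set) = prime_filter_embedding t"
  have "member3 P s = member3 P t" if "prime_filter P" for P
  proof -
    have "(x, y) \<in> diamond (member3 P s) \<longleftrightarrow> (x, y) \<in> diamond (member3 P t)" for x y :: 'f
      using prime_filter_embedding_point[OF that, of x y s] prime_filter_embedding_point[OF that, of x y t] eq
      by simp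
    then have "(diamond (member3 P s) :: ('f \<times> 'f) set) = diamond (member3 P t)" by auto
    then show ?thesis
      using inj_on_diamond \<open>s \<in> M3\<close> \<open>t \<in> M3\<close> that by (metis inj_on_def member3_in_M3)
  qed
  moreover obtain a b c a' b' c' where s: "s = (a, b, c)" and t: "t = (a', b', c')" by (cases s, cases t)
  ultimately have "a \<in> P \<longleftrightarrow> a' \<in> P" "b \<in> P \<longleftrightarrow> b' \<in> P" "c \<in> P \<longleftrightarrow> c' \<in> P"
    if "prime_filter P" for P using that by simp_all
  then have "a = a'" "b = b'" "c = c'" by (auto intro: eq_if_same_prime_filters[OF distrib])
  then show "s = t" unfolding s t by simp
qed

theorem subspace_embedding_M3:
  assumes "class.distrib_lattice inf (\<le>) (<) (sup :: 'a::lattice \<Rightarrow> 'a \<Rightarrow> 'a)"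
  shows "subspace_lattice_embedding fscale M3 (\<le>)
    (prime_filter_embedding :: 'a \<times> 'a \<times> 'a \<Rightarrow> ('a set \<times> bool \<Rightarrow> 'f::field) set)"
  unfolding subspace_lattice_embedding_def
proof (intro conjI ballI)
  interpret vector_space "fscale :: 'f \<Rightarrow> ('a set \<times> bool \<Rightarrow> 'f) \<Rightarrow> _" by (rule vector_space_fscale)
  show "inj_on (prime_filter_embedding :: _ \<Rightarrow> ('a set \<times> bool \<Rightarrow> 'f) set) M3"
    by (rule inj_on_prime_filter_embedding[OF assms])
  fix s t :: "'a \<times> 'a \<times> 'a" assume "s \<in> M3" "t \<in> M3"
  then show "subspace (prime_filter_embedding s :: ('a set \<times> bool \<Rightarrow> 'f) set)"
    and "prime_filter_embedding (pmeet M3 (\<le>) s t) = prime_filter_embedding s \<inter> (prime_filter_embedding t :: ('a set \<times> bool \<Rightarrow> 'f) set)"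
    and "prime_filter_embedding (pjoin M3 (\<le>) s t) = span (prime_filter_embedding s \<union> (prime_filter_embedding t :: ('a set \<times> bool \<Rightarrow> 'f) set))"
    by (simp_all add: subspace_prime_filter_embedding pmeet_M3 prime_filter_embedding_inf pjoin_M3[OF assms]
        prime_filter_embedding_balanced_closure_sup span_Un_subspaces)
qed

theorem proposition6p5:
  shows "(distributive_lattice TYPE('a::lattice) \<longleftrightarrow> modular_lattice_on (M3 :: ('a \<times> 'a \<times> 'a) set) le3)
       \<and> (distributive_lattice TYPE('a) \<longleftrightarrow> arguesian_lattice_on (M3 :: ('a \<times> 'a \<times> 'a) set) le3)
       \<and> (distributive_lattice TYPE('a) \<longrightarrow>
            (\<exists>\<phi> :: 'a \<times> 'a \<times> 'a \<Rightarrow> ('a set \<times> bool \<Rightarrow> 'f::field) set.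
               subspace_lattice_embedding fscale M3 le3 \<phi>))"
proof -
  let ?M3 = "M3 :: ('a \<times> 'a \<times> 'a) set"
  let ?\<phi> = "prime_filter_embedding :: _ \<Rightarrow> ('a set \<times> bool \<Rightarrow> 'f) set"
  have embedding: "subspace_lattice_embedding fscale ?M3 (\<le>) ?\<phi>"
    and lattice: "lattice_on ?M3 (\<le>)" if "distributive_lattice TYPE('a)"
    using subspace_embedding_M3 lattice_on_M3 distrib_lattice_if_distributive[OF that] by blast+
  have "modular_lattice_on ?M3 (\<le>)" "arguesian_lattice_on ?M3 (\<le>)" if "distributive_lattice TYPE('a)"
    using lattice_on.modular_if_subspace_embedding lattice_on.arguesian_if_subspace_embedding
      lattice[OF that] vector_space_fscale embedding[OF that] by blast+
  moreover have "distributive_lattice TYPE('a)"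
    if "modular_lattice_on ?M3 (\<le>) \<or> arguesian_lattice_on ?M3 (\<le>)"
  proof -
    have "lattice_on ?M3 (\<le>)"
      using that poset_on_M3
      unfolding modular_lattice_on_def arguesian_lattice_on_def lattice_on_def lattice_on_axioms_def by blast
    then show ?thesis
      using that lattice_on.modular_inequality_if_modular lattice_on.modular_inequality_if_arguesian
        distributive_if_M3_modular_inequality by blast
  qed
  ultimately show ?thesis unfolding le3_eq_less_eq using embedding by blast
qed

end
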